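(* Let $\alpha>0$, $A\ge0$, $B>0$, $t>0$, and let $P_n(x,t)$ be the monic polynomials orthogonal on $[0,\infty)$ w.r.t. $w(x,t)=x^\alpha e^{-x}(A+B\theta(x-t))$, with norms $h_n(t)$. Let $R_n(t)=Bt^\alpha e^{-t}\{P_n(t,t)\}^2/h_n(t)$ and $r_n(t)=Bt^\alpha e^{-t}P_n(t,t)P_{n-1}(t,t)/h_{n-1}(t)$. Then for fixed $n\ge1$ $$tR_n'(t)=2r_n+(2n+\alpha-t+tR_n)R_n.$$
   Context: $\theta$ is the Heaviside function ($1$ for $x>0$, $0$ otherwise); $P_n(t,t)$ is $P_n(x,t)$ at $x=t$; prime denotes $d/dt$. *)

theory Defs
  imports "HOL-Analysis.Analysis" "HOL-Computational_Algebra.Polynomial"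
begin

definition heaviside :: "real \<Rightarrow> real" where
  "heaviside x = (if x > 0 then 1 else 0)"

definition wgt :: "real \<Rightarrow> real \<Rightarrow> real \<Rightarrow> real \<Rightarrow> real \<Rightarrow> real" where
  "wgt \<alpha> A B t x = x powr \<alpha> * exp (- x) * (A + B * heaviside (x - t))"

definition is_monic_orth :: "real \<Rightarrow> real \<Rightarrow> real \<Rightarrow> real \<Rightarrow> nat \<Rightarrow> real poly \<Rightarrow> bool" where
  "is_monic_orth \<alpha> A B t n p \<longleftrightarrow>
     degree p = n \<and> lead_coeff p = 1 \<and>
     (\<forall>q :: real poly. degree q < n \<longrightarrow>
        (LINT x:{0..}|lborel. poly p x * poly q x * wgt \<alpha> A B t x) = 0)"

definition Pn :: "real \<Rightarrow> real \<Rightarrow> real \<Rightarrow> nat \<Rightarrow> real \<Rightarrow> real poly" where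
  "Pn \<alpha> A B n t = (THE p. is_monic_orth \<alpha> A B t n p)"

definition hn :: "real \<Rightarrow> real \<Rightarrow> real \<Rightarrow> nat \<Rightarrow> real \<Rightarrow> real" where
  "hn \<alpha> A B n t = (LINT x:{0..}|lborel. (poly (Pn \<alpha> A B n t) x)\<^sup>2 * wgt \<alpha> A B t x)"

definition Rn :: "real \<Rightarrow> real \<Rightarrow> real \<Rightarrow> nat \<Rightarrow> real \<Rightarrow> real" where
  "Rn \<alpha> A B n t = B * t powr \<alpha> * exp (- t) * (poly (Pn \<alpha> A B n t) t)\<^sup>2 / hn \<alpha> A B n t"

definition rn :: "real \<Rightarrow> real \<Rightarrow> real \<Rightarrow> nat \<Rightarrow> real \<Rightarrow> real" where
  "rn \<alpha> A B n t = B * t powr \<alpha> * exp (- t) * poly (Pn \<alpha> A B n t) t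
       * poly (Pn \<alpha> A B (n - 1) t) t / hn \<alpha> A B (n - 1) t"

end

theory Submission
  imports Defs "HOL-Real_Asymp.Real_Asymp"
begin

text \<open>
  Every moment \<integral> x^k w(x,t) dx is a combination of upper incomplete Gamma functions, so it
  is differentiable in t with derivative -g(t) t^k, where g(t) = B t^\<alpha> e^(-t) is the jump of w
  at x = t, and integration by parts gives \<mu>_(k+1) = (k+1+\<alpha>) \<mu>_k + t^(k+1) g(t). Gram-Schmidt
  expresses the coefficients of P_n as rational functions of the moments, so P_n is differentiable
  in t, and differentiating h_n = \<integral> P_n^2 w gives h_n' = -g P_n(t,t)^2. Differentiating the
  orthogonality relations and integrating by parts once more shows that
  x \<partial>_x P_n + t \<partial>_t P_n - n P_n - (h_n/h_(n-1)) P_(n-1) has degree < n and is orthogonal to all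
  lower powers of x, hence vanishes. At x = t this is the ladder relation
  t (d/dt) P_n(t,t) = n P_n(t,t) + (h_n/h_(n-1)) P_(n-1)(t,t), and the equation for
  R_n = g P_n(t,t)^2/h_n follows by the quotient rule.
\<close>

section \<open>Upper incomplete Gamma function\<close>

text \<open>Note the shift: Gamma_tail m a is \<Gamma>(m+1, a).\<close>
definition Gamma_tail :: "real \<Rightarrow> real \<Rightarrow> real" where
  "Gamma_tail m a = (LINT x:{a<..}|lborel. x powr m * exp (- x))"

lemma set_integrable_powr_exp:
  fixes m a :: real
  assumes "-1 < m" "0 \<le> a"
  shows "set_integrable lborel {a<..} (\<lambda>x. x powr m * exp (- x))"
proof -
  have "(\<lambda>x::real. x powr m / exp x) integrable_on {0..}"
    using Gamma_integral_real[of "m + 1"] assms by (auto simp: integrable_on_def)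
  hence "(\<lambda>x. x powr m / exp x) absolutely_integrable_on {0..}"
    by (rule nonnegative_absolutely_integrable_1) auto
  hence "(\<lambda>x. x powr m / exp x) absolutely_integrable_on {a<..}"
    by (rule set_integrable_subset) (use assms in auto)
  hence "integrable lebesgue (\<lambda>x. indicator {a<..} x *\<^sub>R (x powr m / exp x))"
    by (simp add: set_integrable_def)
  hence "integrable lborel (\<lambda>x. indicator {a<..} x *\<^sub>R (x powr m / exp x))"
    by (subst (asm) integrable_completion) auto
  thus ?thesis by (simp add: set_integrable_def exp_minus field_simps)
qed

lemma Gamma_tail_plus1:
  fixes m a :: real
  assumes "-1 < m" "0 \<le> a"
  shows "Gamma_tail (m + 1) a = a powr (m + 1) * exp (- a) + (m + 1) * Gamma_tail m a"
proof -
  define F where "F x = - (x powr (m + 1) * exp (- x))" for x :: real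
  define f where "f x = x powr (m + 1) * exp (- x) - (m + 1) * (x powr m * exp (- x))" for x :: real
  have int1: "set_integrable lborel {a<..} (\<lambda>x. x powr (m + 1) * exp (- x))"
    using set_integrable_powr_exp[of "m + 1" a] assms by auto
  have int2: "set_integrable lborel {a<..} (\<lambda>x. x powr m * exp (- x))"
    using set_integrable_powr_exp assms by auto
  have "(LBINT x=ereal a..\<infinity>. f x) = 0 - F a"
  proof (rule interval_integral_FTC_integrable)
    fix x assume "ereal a < ereal x"
    hence "x > 0" using assms by auto
    thus "(F has_vector_derivative f x) (at x)" "isCont f x"
      unfolding F_def f_def has_real_derivative_iff_has_vector_derivative[symmetric]
      by (auto intro!: derivative_eq_intros continuous_intros simp: field_simps)
  next
    show "set_integrable lborel (einterval (ereal a) \<infinity>) f"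
      unfolding f_def using int1 int2 by (auto intro!: set_integral_diff set_integrable_mult_right)
    have "(F \<longlongrightarrow> F a) (at_right a)"
    proof (cases "a = 0")
      case True
      have "((\<lambda>x. x powr (m + 1)) \<longlongrightarrow> 0) (at_right 0)"
        by (rule tendsto_zero_powrI[where b = "m + 1"])
           (use assms in \<open>auto intro!: tendsto_intros eventually_at_rightI[of 0 1]\<close>)
      hence "(F \<longlongrightarrow> - (0 * exp (- 0))) (at_right 0)"
        unfolding F_def by (intro tendsto_intros)
      thus ?thesis using True by (simp add: F_def)
    next
      case False
      hence "isCont F a" using assms unfolding F_def by (auto intro!: continuous_intros)
      thus ?thesis by (simp add: isCont_def filterlim_at_split)
    qed
    thus "((F \<circ> real_of_ereal) \<longlongrightarrow> F a) (at_right (ereal a))"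
      unfolding ereal_tendsto_simps .
    show "((F \<circ> real_of_ereal) \<longlongrightarrow> 0) (at_left \<infinity>)"
      unfolding ereal_tendsto_simps F_def using assms by real_asymp
  qed simp
  also have "(LBINT x=ereal a..\<infinity>. f x) = (LINT x:{a<..}|lborel. f x)"
    by (rule interval_integral_to_infinity_eq)
  also have "\<dots> = Gamma_tail (m + 1) a - (m + 1) * Gamma_tail m a"
    unfolding f_def Gamma_tail_def using int1 int2
    by (simp add: set_integral_diff set_integral_mult_right)
  finally show ?thesis unfolding F_def by simp
qed

lemma has_real_derivative_Gamma_tail:
  fixes m a :: real
  assumes "-1 < m" "0 < a"
  shows "(Gamma_tail m has_real_derivative - (a powr m * exp (- a))) (at a)"
proof -
  define f where "f x = x powr m * exp (- x)" for x :: real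
  define c where "c = a / 2"
  have c: "0 < c" "c < a" using assms by (auto simp: c_def)
  have "continuous_on {c..2 * a} f" unfolding f_def using c by (auto intro!: continuous_intros)
  hence "((\<lambda>u. LBINT y=c..u. f y) has_vector_derivative f a) (at a within {c..2 * a})"
    by (intro interval_integral_FTC2) (use c in auto)
  hence FTC: "((\<lambda>u. LBINT y=c..u. f y) has_real_derivative f a) (at a)"
    using c by (simp add: at_within_Icc_at has_real_derivative_iff_has_vector_derivative)
  have split: "Gamma_tail m u = Gamma_tail m c - (LBINT y=c..u. f y)" if "u \<in> {c<..}" for u
  proof -
    have u: "c < u" using that by auto
    have int: "set_integrable lborel {c<..} f"
      unfolding f_def using set_integrable_powr_exp[of m c] c assms by auto
    have "Gamma_tail m c = (LINT x:{c<..u} \<union> {u<..}|lborel. f x)"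
      unfolding Gamma_tail_def f_def using u by (simp add: ivl_disj_un)
    also have "\<dots> = (LINT x:{c<..u}|lborel. f x) + (LINT x:{u<..}|lborel. f x)"
      by (rule set_integral_Un) (use u in \<open>auto intro: set_integrable_subset[OF int]\<close>)
    also have "(LINT x:{c<..u}|lborel. f x) = (LBINT y=c..u. f y)"
      using u by (simp add: interval_integral_Ioc)
    finally show ?thesis unfolding Gamma_tail_def f_def by simp
  qed
  have "((\<lambda>u. Gamma_tail m c - (LBINT y=c..u. f y)) has_real_derivative - f a) (at a)"
    using FTC by (auto intro!: derivative_eq_intros)
  hence "(Gamma_tail m has_real_derivative - f a) (at a)"
    by (rule has_field_derivative_transform_within_open[where S = "{c<..}"]) (use c split in auto)
  thus ?thesis unfolding f_def .
qed

section \<open>Polynomials with differentiable coefficients\<close>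

lemma poly_eq_sum_upto:
  fixes p :: "'a::comm_semiring_1 poly"
  assumes "degree p \<le> N"
  shows "poly p x = (\<Sum>i\<le>N. coeff p i * x ^ i)"
  by (subst poly_as_sum_of_monoms'[OF assms, symmetric]) (simp add: poly_sum poly_monom)

lemma eq_0_or_degree_less_if_coeff_eq_0:
  fixes p :: "'a::zero poly"
  assumes "degree p \<le> n" "coeff p n = 0"
  shows "p = 0 \<or> degree p < n"
  using assms leading_coeff_0_iff[of p] by (auto simp: le_less)

lemma monom_1_mult_pderiv_monom: "monom 1 1 * pderiv (monom c k) = smult (of_nat k) (monom c k)"
  by (cases k) (simp_all add: pderiv_monom mult_monom smult_monom)

definition coeffs_differentiable :: "(real \<Rightarrow> real poly) \<Rightarrow> real \<Rightarrow> bool" where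
  "coeffs_differentiable P t \<longleftrightarrow> (\<forall>k. (\<lambda>s. coeff (P s) k) differentiable (at t))"

definition coeffs_deriv :: "(real \<Rightarrow> real poly) \<Rightarrow> real \<Rightarrow> nat \<Rightarrow> real poly" where
  "coeffs_deriv P t N = (\<Sum>k\<le>N. monom (deriv (\<lambda>s. coeff (P s) k) t) k)"

lemma coeffs_differentiableD:
  "coeffs_differentiable P t \<Longrightarrow>
     ((\<lambda>s. coeff (P s) k) has_real_derivative deriv (\<lambda>s. coeff (P s) k) t) (at t)"
  unfolding coeffs_differentiable_def using DERIV_deriv_iff_real_differentiable by blast

lemma coeff_coeffs_deriv:
  "coeff (coeffs_deriv P t N) k = (if k \<le> N then deriv (\<lambda>s. coeff (P s) k) t else 0)"
  unfolding coeffs_deriv_def by (simp add: coeff_sum coeff_monom)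

lemma degree_coeffs_deriv: "degree (coeffs_deriv P t N) \<le> N"
  unfolding coeffs_deriv_def by (intro degree_sum_le) (auto intro: order.trans[OF degree_monom_le])

lemma coeffs_differentiable_const: "coeffs_differentiable (\<lambda>s. p) t"
  unfolding coeffs_differentiable_def by simp

lemma coeffs_deriv_const: "coeffs_deriv (\<lambda>s. p) t N = 0"
  unfolding coeffs_deriv_def by simp

lemma has_real_derivative_poly_diagonal:
  assumes deg: "\<And>s. degree (P s) \<le> N" and diff: "coeffs_differentiable P t"
  shows "((\<lambda>s. poly (P s) s) has_real_derivative
            poly (coeffs_deriv P t N) t + poly (pderiv (P t)) t) (at t)"
proof -
  define c where "c k s = coeff (P s) k" for k s
  define c' where "c' k = deriv (c k) t" for k
  have "((\<lambda>s. \<Sum>k\<le>N. c k s * s ^ k) has_real_derivative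
          (\<Sum>k\<le>N. c' k * t ^ k) + (\<Sum>k\<le>N. c k t * (real k * t ^ (k - 1)))) (at t)"
    unfolding sum.distrib[symmetric] c'_def c_def
    by (intro DERIV_sum DERIV_cong[OF DERIV_mult[OF coeffs_differentiableD[OF diff] DERIV_pow]])
       (simp add: algebra_simps)
  moreover have "((\<lambda>x. \<Sum>k\<le>N. c k t * x ^ k) has_real_derivative
                   (\<Sum>k\<le>N. c k t * (real k * t ^ (k - 1)))) (at t)"
    by (intro DERIV_sum DERIV_cmult) (simp add: DERIV_pow)
  hence "(\<Sum>k\<le>N. c k t * (real k * t ^ (k - 1))) = poly (pderiv (P t)) t"
    using poly_DERIV[of "P t" t] DERIV_unique
    unfolding c_def poly_eq_sum_upto[OF deg, symmetric] by blast
  moreover have "poly (coeffs_deriv P t N) t = (\<Sum>k\<le>N. c' k * t ^ k)"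
    unfolding coeffs_deriv_def c'_def c_def by (simp add: poly_sum poly_monom)
  ultimately show ?thesis unfolding c_def poly_eq_sum_upto[OF deg] by simp
qed

section \<open>The moment functional of the weight\<close>

locale jump_weight =
  fixes \<alpha> A B :: real
  assumes alpha_pos: "\<alpha> > 0" and A_nonneg: "A \<ge> 0" and B_pos: "B > 0"
begin

definition wint :: "real \<Rightarrow> real poly \<Rightarrow> real" where
  "wint s p = (LINT x:{0..}|lborel. poly p x * wgt \<alpha> A B s x)"

definition moment :: "nat \<Rightarrow> real \<Rightarrow> real" where
  "moment k s = (LINT x:{0..}|lborel. x ^ k * wgt \<alpha> A B s x)"

definition jump :: "real \<Rightarrow> real" where
  "jump s = B * s powr \<alpha> * exp (- s)"

lemma monomial_wgt_split:
  "indicator {0..} x * (x ^ k * wgt \<alpha> A B s x) =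
     A * (indicator {0<..} x * (x powr (real k + \<alpha>) * exp (- x)))
   + B * (indicator {max 0 s<..} x * (x powr (real k + \<alpha>) * exp (- x)))"
proof (cases "x > 0")
  case True
  hence "x powr (real k + \<alpha>) = x ^ k * x powr \<alpha>"
    by (simp add: powr_add powr_realpow)
  then show ?thesis using True
    by (auto simp: wgt_def heaviside_def indicator_def algebra_simps)
next
  case False
  then show ?thesis using alpha_pos
    by (cases "x = 0") (auto simp: wgt_def indicator_def)
qed

lemma integrable_indicator_powr_exp:
  "integrable lborel (\<lambda>x. indicator {max 0 a<..} x * (x powr (real k + \<alpha>) * exp (- x)))"
  using set_integrable_powr_exp[of "real k + \<alpha>" "max 0 a"] alpha_pos
  by (simp add: set_integrable_def)

lemma set_integrable_monomial_wgt: "set_integrable lborel {0..} (\<lambda>x. x ^ k * wgt \<alpha> A B s x)"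
  using integrable_indicator_powr_exp[of 0 k] integrable_indicator_powr_exp[of s k]
  unfolding set_integrable_def by (simp add: monomial_wgt_split)

lemma moment_eq_Gamma_tail:
  "moment k s = A * Gamma_tail (real k + \<alpha>) 0 + B * Gamma_tail (real k + \<alpha>) (max 0 s)"
  using integrable_indicator_powr_exp[of 0 k] integrable_indicator_powr_exp[of s k]
  unfolding moment_def Gamma_tail_def set_lebesgue_integral_def by (simp add: monomial_wgt_split)

lemma moment_Suc:
  assumes "s > 0"
  shows "moment (Suc k) s = (real k + 1 + \<alpha>) * moment k s + s ^ Suc k * jump s"
proof -
  have m: "-1 < real k + \<alpha>" using alpha_pos by simp
  have e: "real (Suc k) + \<alpha> = (real k + \<alpha>) + 1" by simp
  have "s powr (real k + \<alpha> + 1) = s ^ Suc k * s powr \<alpha>"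
    using assms by (simp add: powr_add powr_realpow algebra_simps)
  hence "Gamma_tail (real k + \<alpha> + 1) s
           = s ^ Suc k * s powr \<alpha> * exp (- s) + (real k + \<alpha> + 1) * Gamma_tail (real k + \<alpha>) s"
    using Gamma_tail_plus1[OF m, of s] assms by simp
  moreover have "Gamma_tail (real k + \<alpha> + 1) 0 = (real k + \<alpha> + 1) * Gamma_tail (real k + \<alpha>) 0"
    using Gamma_tail_plus1[OF m, of 0] m by simp
  ultimately show ?thesis
    unfolding moment_eq_Gamma_tail e using assms by (simp add: jump_def algebra_simps)
qed

lemma has_real_derivative_moment:
  assumes "t > 0"
  shows "(moment k has_real_derivative - (jump t * t ^ k)) (at t)"
proof -
  have m: "-1 < real k + \<alpha>" using alpha_pos by simp
  have "((\<lambda>s. A * Gamma_tail (real k + \<alpha>) 0 + B * Gamma_tail (real k + \<alpha>) s) has_real_derivative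
          B * - (t powr (real k + \<alpha>) * exp (- t))) (at t)"
    using has_real_derivative_Gamma_tail[OF m assms] by (auto intro!: derivative_eq_intros)
  hence "(moment k has_real_derivative B * - (t powr (real k + \<alpha>) * exp (- t))) (at t)"
    by (rule has_field_derivative_transform_within_open[where S = "{0<..}"])
       (use assms in \<open>auto simp: moment_eq_Gamma_tail\<close>)
  moreover have "t powr (real k + \<alpha>) = t ^ k * t powr \<alpha>"
    using assms by (simp add: powr_add powr_realpow)
  ultimately show ?thesis by (simp add: jump_def algebra_simps)
qed

lemma has_real_derivative_jump:
  assumes "t > 0"
  shows "(jump has_real_derivative (\<alpha> - t) * jump t / t) (at t)"
proof -
  have "(jump has_real_derivative B * (\<alpha> * t powr (\<alpha> - 1) * exp (- t) - t powr \<alpha> * exp (- t))) (at t)"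
    unfolding jump_def using assms by (auto intro!: derivative_eq_intros simp: algebra_simps)
  moreover have "t powr (\<alpha> - 1) = t powr \<alpha> / t"
    using assms by (simp add: powr_diff)
  ultimately show ?thesis using assms by (simp add: jump_def field_simps)
qed

lemma set_integrable_poly_wgt: "set_integrable lborel {0..} (\<lambda>x. poly p x * wgt \<alpha> A B s x)"
proof -
  have "integrable lborel
          (\<lambda>x. \<Sum>i\<le>degree p. coeff p i * (indicator {0..} x *\<^sub>R (x ^ i * wgt \<alpha> A B s x)))"
    using set_integrable_monomial_wgt unfolding set_integrable_def
    by (intro Bochner_Integration.integrable_sum integrable_mult_right)
  hence "set_integrable lborel {0..} (\<lambda>x. \<Sum>i\<le>degree p. coeff p i * (x ^ i * wgt \<alpha> A B s x))"
    unfolding set_integrable_def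
    by (simp only: real_scaleR_def sum_distrib_left mult_ac)
  thus ?thesis by (simp only: poly_altdef sum_distrib_right mult.assoc)
qed

lemma wint_0 [simp]: "wint s 0 = 0"
  by (simp add: wint_def)

lemma wint_add: "wint s (p + q) = wint s p + wint s q"
  unfolding wint_def by (simp add: distrib_right set_integrable_poly_wgt set_integral_add(2))

lemma wint_diff: "wint s (p - q) = wint s p - wint s q"
  unfolding wint_def by (simp add: left_diff_distrib set_integrable_poly_wgt set_integral_diff(2))

lemma wint_smult: "wint s (smult c p) = c * wint s p"
  unfolding wint_def by (simp add: mult.assoc)

lemma wint_sum: "wint s (\<Sum>i\<in>I. f i) = (\<Sum>i\<in>I. wint s (f i))"
  by (induction I rule: infinite_finite_induct) (simp_all add: wint_add)

lemma wint_monom: "wint s (monom c k) = c * moment k s"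
  unfolding wint_def moment_def by (simp add: poly_monom mult.assoc)

lemma wint_mult_as_moments:
  assumes "degree p \<le> N" "degree q \<le> N"
  shows "wint s (p * q) = (\<Sum>k\<le>N. \<Sum>l\<le>N. coeff p k * coeff q l * moment (k + l) s)"
proof -
  have "p * q = (\<Sum>k\<le>N. monom (coeff p k) k) * (\<Sum>l\<le>N. monom (coeff q l) l)"
    using poly_as_sum_of_monoms'[OF assms(1)] poly_as_sum_of_monoms'[OF assms(2)] by simp
  also have "\<dots> = (\<Sum>k\<le>N. \<Sum>l\<le>N. monom (coeff p k * coeff q l) (k + l))"
    by (simp add: sum_product mult_monom)
  finally show ?thesis by (simp add: wint_sum wint_monom)
qed

lemma wint_square_pos:
  assumes "p \<noteq> 0"
  shows "wint s (p * p) > 0"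
proof -
  define f where "f x = indicator {0..} x * (poly (p * p) x * wgt \<alpha> A B s x)" for x
  have pos: "f x > 0" if "max 0 s < x" "poly p x \<noteq> 0" for x
  proof -
    have "wgt \<alpha> A B s x > 0" using that A_nonneg B_pos
      by (auto simp: wgt_def heaviside_def intro!: mult_pos_pos add_nonneg_pos)
    moreover have "poly p x * poly p x > 0" using that(2) by (metis not_real_square_gt_zero)
    ultimately show ?thesis using that unfolding f_def by (simp add: indicator_def)
  qed
  have nonneg: "f x \<ge> 0" for x
    using A_nonneg B_pos
    by (auto simp: f_def indicator_def wgt_def heaviside_def intro!: mult_nonneg_nonneg)
  have int: "integrable lborel f"
    using set_integrable_poly_wgt[of "p * p" s] unfolding f_def set_integrable_def by simp
  have "\<not> (AE x in lborel. f x = 0)"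
  proof
    assume "AE x in lborel. f x = 0"
    then obtain N where N: "{x \<in> space lborel. \<not> f x = 0} \<subseteq> N"
      "emeasure lborel N = 0" "N \<in> sets lborel"
      by (rule AE_E)
    define I where "I = {max 0 s<..max 0 s + 1}"
    have "I - {x. poly p x = 0} \<subseteq> N"
    proof
      fix x assume "x \<in> I - {x. poly p x = 0}"
      hence "f x > 0" using pos by (auto simp: I_def)
      thus "x \<in> N" using N(1) by auto
    qed
    moreover have "emeasure lborel (I - {x. poly p x = 0}) = 1"
      using emeasure_Diff_null_set[OF finite_imp_null_set_lborel[OF poly_roots_finite[OF assms]]]
      unfolding I_def by simp
    ultimately show False using emeasure_mono[of _ N lborel] N(2,3) by fastforce
  qed
  hence "integral\<^sup>L lborel f \<noteq> 0"
    using integral_nonneg_eq_0_iff_AE[OF int] nonneg by simp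
  moreover have "integral\<^sup>L lborel f \<ge> 0" using nonneg by simp
  ultimately show ?thesis unfolding wint_def f_def set_lebesgue_integral_def by simp
qed

lemma wint_square_eq_0_iff: "wint s (p * p) = 0 \<longleftrightarrow> p = 0"
  using wint_square_pos[of p s] by (cases "p = 0") auto

section \<open>Orthogonal polynomials\<close>

function orth_poly :: "real \<Rightarrow> nat \<Rightarrow> real poly" where
  "orth_poly s 0 = 1"
| "orth_poly s (Suc n) = monom 1 (Suc n) -
     (\<Sum>j\<le>n. smult (wint s (monom 1 (Suc n) * orth_poly s j) / wint s (orth_poly s j * orth_poly s j))
                 (orth_poly s j))"
  by pat_completeness auto
termination by (relation "Wellfounded.measure snd") auto

lemma orth_poly_props:
  "degree (orth_poly s n) = n \<and> coeff (orth_poly s n) n = 1 \<and>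
   (\<forall>j<n. wint s (orth_poly s n * orth_poly s j) = 0)"
proof (induction n rule: less_induct)
  case (less n)
  show ?case
  proof (cases n)
    case (Suc m)
    define a where "a j = wint s (monom 1 (Suc m) * orth_poly s j) / wint s (orth_poly s j * orth_poly s j)" for j
    define S where "S = (\<Sum>j\<le>m. smult (a j) (orth_poly s j))"
    have P: "orth_poly s n = monom 1 (Suc m) - S" unfolding Suc S_def a_def by simp
    have IH: "degree (orth_poly s j) = j \<and> coeff (orth_poly s j) j = 1 \<and>
              (\<forall>i<j. wint s (orth_poly s j * orth_poly s i) = 0)" if "j \<le> m" for j
      using less Suc that by auto
    have dS: "degree S \<le> m" unfolding S_def
      by (intro degree_sum_le) (auto intro: order.trans[OF degree_smult_le] simp: IH)
    have "degree (monom 1 (Suc m) - S) = Suc m"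
      by (subst diff_conv_add_uminus, subst degree_add_eq_left) (use dS in \<open>auto simp: degree_monom_eq\<close>)
    moreover have "coeff (monom 1 (Suc m) - S) (Suc m) = 1"
      using dS by (simp add: coeff_eq_0)
    ultimately have "degree (orth_poly s n) = n \<and> coeff (orth_poly s n) n = 1"
      using P Suc by simp
    moreover have "wint s (orth_poly s n * orth_poly s i) = 0" if "i < n" for i
    proof -
      have i: "i \<le> m" using that Suc by simp
      have "wint s (orth_poly s j * orth_poly s i) = 0" if "j \<le> m" "j \<noteq> i" for j
        using IH[OF i] IH[OF that(1)] that by (cases "j < i") (auto simp: mult.commute)
      hence "(\<Sum>j\<le>m. a j * wint s (orth_poly s j * orth_poly s i)) = a i * wint s (orth_poly s i * orth_poly s i)"
        by (subst sum.remove[of _ i]) (use i in \<open>auto intro!: sum.neutral\<close>)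
      also have "\<dots> = wint s (monom 1 (Suc m) * orth_poly s i)"
      proof -
        have "orth_poly s i \<noteq> 0" using IH[OF i] by (metis coeff_0 zero_neq_one)
        thus ?thesis using wint_square_pos[of "orth_poly s i" s] by (simp add: a_def)
      qed
      finally show ?thesis
        unfolding P S_def by (simp add: left_diff_distrib sum_distrib_right wint_diff wint_sum wint_smult)
    qed
    ultimately show ?thesis by blast
  qed simp
qed

lemma degree_orth_poly [simp]: "degree (orth_poly s n) = n"
  and coeff_orth_poly_self [simp]: "coeff (orth_poly s n) n = 1"
  using orth_poly_props by blast+

lemma orth_poly_nonzero: "orth_poly s n \<noteq> 0"
  using coeff_orth_poly_self[of s n] by (metis coeff_0 zero_neq_one)

lemma wint_orth_if_orth_monic_basis:
  assumes basis: "\<And>j. j < n \<Longrightarrow> degree (b j) = j \<and> coeff (b j) j = 1"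
    and orth: "\<And>j. j < n \<Longrightarrow> wint s (p * b j) = 0"
    and "degree q < n"
  shows "wint s (p * q) = 0"
  using \<open>degree q < n\<close>
proof (induction "degree q" arbitrary: q rule: less_induct)
  case less
  define d where "d = degree q"
  define r where "r = q - smult (lead_coeff q) (b d)"
  have "degree r \<le> d" "coeff r d = 0"
    using basis[of d] less.prems unfolding r_def d_def
    by (auto intro!: degree_diff_le intro: order.trans[OF degree_smult_le])
  hence "wint s (p * r) = 0"
    using eq_0_or_degree_less_if_coeff_eq_0 less d_def by fastforce
  moreover have "q = smult (lead_coeff q) (b d) + r" unfolding r_def by simp
  hence "wint s (p * q) = lead_coeff q * wint s (p * b d) + wint s (p * r)"
    by (metis distrib_left mult_smult_right wint_add wint_smult)
  ultimately show ?case using orth less.prems d_def by simp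
qed

lemma wint_orth_poly_lower:
  "degree q < n \<Longrightarrow> wint s (orth_poly s n * q) = 0"
  by (rule wint_orth_if_orth_monic_basis[of n "orth_poly s"]) (use orth_poly_props in auto)

lemma wint_orth_if_orth_monomials:
  "(\<And>j. j < n \<Longrightarrow> wint s (p * monom 1 j) = 0) \<Longrightarrow> degree q < n \<Longrightarrow> wint s (p * q) = 0"
  by (rule wint_orth_if_orth_monic_basis[of n "\<lambda>j. monom 1 j"]) (auto simp: degree_monom_eq)

lemma wint_orth_poly_monic:
  assumes "degree p = m" "coeff p m = 1"
  shows "wint s (orth_poly s m * p) = wint s (orth_poly s m * orth_poly s m)"
proof -
  have "p - orth_poly s m = 0 \<or> degree (p - orth_poly s m) < m"
    using assms by (intro eq_0_or_degree_less_if_coeff_eq_0 degree_diff_le) auto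
  hence "wint s (orth_poly s m * (p - orth_poly s m)) = 0"
    using wint_orth_poly_lower by auto
  thus ?thesis by (simp add: right_diff_distrib wint_diff)
qed

lemma is_monic_orth_iff:
  "is_monic_orth \<alpha> A B s n p \<longleftrightarrow>
     degree p = n \<and> lead_coeff p = 1 \<and> (\<forall>q. degree q < n \<longrightarrow> wint s (p * q) = 0)"
  unfolding is_monic_orth_def wint_def by (simp add: mult.assoc)

lemma Pn_eq_orth_poly: "Pn \<alpha> A B n s = orth_poly s n"
  unfolding Pn_def
proof (rule the_equality)
  show "is_monic_orth \<alpha> A B s n (orth_poly s n)"
    unfolding is_monic_orth_iff by (auto intro: wint_orth_poly_lower)
next
  fix p assume "is_monic_orth \<alpha> A B s n p"
  hence p: "degree p = n" "lead_coeff p = 1" "\<And>q. degree q < n \<Longrightarrow> wint s (p * q) = 0"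
    unfolding is_monic_orth_iff by auto
  define d where "d = p - orth_poly s n"
  have "d = 0 \<or> degree d < n"
    unfolding d_def using p by (intro eq_0_or_degree_less_if_coeff_eq_0 degree_diff_le) auto
  hence "wint s (d * d) = 0"
  proof
    assume "degree d < n"
    moreover have "wint s (d * d) = wint s (p * d) - wint s (orth_poly s n * d)"
      unfolding d_def by (simp add: left_diff_distrib wint_diff)
    ultimately show ?thesis using p(3) wint_orth_poly_lower by simp
  qed simp
  thus "p = orth_poly s n" using wint_square_eq_0_iff d_def by simp
qed

lemma hn_eq_wint: "hn \<alpha> A B n s = wint s (orth_poly s n * orth_poly s n)"
  unfolding hn_def wint_def Pn_eq_orth_poly by (simp add: power2_eq_square)

section \<open>Dependence on the jump position\<close>

lemma has_real_derivative_wint_mult: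
  assumes t: "t > 0" and deg: "\<And>s. degree (P s) \<le> N" "\<And>s. degree (Q s) \<le> N"
    and diff: "coeffs_differentiable P t" "coeffs_differentiable Q t"
  shows "((\<lambda>s. wint s (P s * Q s)) has_real_derivative
            wint t (coeffs_deriv P t N * Q t) + wint t (P t * coeffs_deriv Q t N)
            - jump t * poly (P t) t * poly (Q t) t) (at t)"
proof -
  define c where "c k = (\<lambda>s. coeff (P s) k)" for k
  define e where "e k = (\<lambda>s. coeff (Q s) k)" for k
  define c' where "c' k = deriv (c k) t" for k
  define e' where "e' k = deriv (e k) t" for k
  have dc: "(c k has_real_derivative c' k) (at t)" and de: "(e k has_real_derivative e' k) (at t)" for k
    unfolding c_def c'_def e_def e'_def using coeffs_differentiableD[OF diff(1)] coeffs_differentiableD[OF diff(2)]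
    by simp_all
  have "((\<lambda>s. \<Sum>k\<le>N. \<Sum>l\<le>N. c k s * e l s * moment (k + l) s) has_real_derivative
          (\<Sum>k\<le>N. \<Sum>l\<le>N. c' k * e l t * moment (k + l) t + c k t * e' l * moment (k + l) t
                            - jump t * (c k t * e l t * t ^ (k + l)))) (at t)"
    by (intro DERIV_sum DERIV_cong[OF DERIV_mult[OF DERIV_mult[OF dc de] has_real_derivative_moment[OF t]]])
       (simp add: algebra_simps)
  moreover have "wint s (P s * Q s) = (\<Sum>k\<le>N. \<Sum>l\<le>N. c k s * e l s * moment (k + l) s)" for s
    unfolding c_def e_def by (rule wint_mult_as_moments[OF deg])
  moreover have "(\<Sum>k\<le>N. \<Sum>l\<le>N. c' k * e l t * moment (k + l) t + c k t * e' l * moment (k + l) t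
                            - jump t * (c k t * e l t * t ^ (k + l)))
      = wint t (coeffs_deriv P t N * Q t) + wint t (P t * coeffs_deriv Q t N)
        - jump t * poly (P t) t * poly (Q t) t"
  proof -
    have "wint t (coeffs_deriv P t N * Q t) = (\<Sum>k\<le>N. \<Sum>l\<le>N. c' k * e l t * moment (k + l) t)"
      by (subst wint_mult_as_moments[OF degree_coeffs_deriv deg(2)])
         (simp add: coeff_coeffs_deriv c'_def c_def e_def)
    moreover have "wint t (P t * coeffs_deriv Q t N) = (\<Sum>k\<le>N. \<Sum>l\<le>N. c k t * e' l * moment (k + l) t)"
      by (subst wint_mult_as_moments[OF deg(1) degree_coeffs_deriv])
         (simp add: coeff_coeffs_deriv e'_def c_def e_def)
    moreover have "jump t * poly (P t) t * poly (Q t) t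
                     = (\<Sum>k\<le>N. \<Sum>l\<le>N. jump t * (c k t * e l t * t ^ (k + l)))"
      unfolding poly_eq_sum_upto[OF deg(1)] poly_eq_sum_upto[OF deg(2)] c_def e_def
      by (simp add: sum_product sum_distrib_left power_add algebra_simps)
    ultimately show ?thesis by (simp add: sum.distrib sum_subtractf)
  qed
  ultimately show ?thesis by simp
qed

lemma coeffs_differentiable_orth_poly:
  assumes t: "t > 0"
  shows "coeffs_differentiable (\<lambda>s. orth_poly s n) t"
proof (induction n rule: less_induct)
  case (less n)
  show ?case
  proof (cases n)
    case (Suc m)
    have diff_wint: "(\<lambda>s. wint s (P s * orth_poly s j)) differentiable (at t)"
      if "j \<le> m" "\<And>s. degree (P s) \<le> Suc m" "coeffs_differentiable P t" for P j
      using has_real_derivative_wint_mult[OF t, of P "Suc m" "\<lambda>s. orth_poly s j"] that less Suc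
      unfolding real_differentiable_def by auto
    have "(\<lambda>s. wint s (monom 1 (Suc m) * orth_poly s j) / wint s (orth_poly s j * orth_poly s j)
             * coeff (orth_poly s j) k) differentiable (at t)" if "j \<le> m" for j k
    proof (intro differentiable_mult differentiable_divide diff_wint)
      show "wint t (orth_poly t j * orth_poly t j) \<noteq> 0"
        using wint_square_pos[OF orth_poly_nonzero[of t j], of t] by simp
      show "(\<lambda>s. coeff (orth_poly s j) k) differentiable (at t)"
        using less Suc that unfolding coeffs_differentiable_def by simp
    qed (use that less Suc in \<open>simp_all add: coeffs_differentiable_const degree_monom_le\<close>)
    hence "(\<lambda>s. coeff (monom 1 (Suc m)) k - (\<Sum>j\<le>m.
             wint s (monom 1 (Suc m) * orth_poly s j) / wint s (orth_poly s j * orth_poly s j)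
             * coeff (orth_poly s j) k)) differentiable (at t)" for k
      by (intro differentiable_diff differentiable_const differentiable_sum) auto
    thus ?thesis unfolding coeffs_differentiable_def Suc by (simp add: coeff_sum)
  qed (simp add: coeffs_differentiable_def)
qed

lemma has_real_derivative_hn:
  assumes "t > 0"
  shows "((\<lambda>s. hn \<alpha> A B n s) has_real_derivative - (jump t * (poly (Pn \<alpha> A B n t) t)\<^sup>2)) (at t)"
proof -
  define Q where "Q = coeffs_deriv (\<lambda>s. orth_poly s n) t n"
  have "coeff Q n = 0" unfolding Q_def by (simp add: coeff_coeffs_deriv)
  hence "wint t (orth_poly t n * Q) = 0" "wint t (Q * orth_poly t n) = 0"
    using eq_0_or_degree_less_if_coeff_eq_0[OF degree_coeffs_deriv[of _ t n]] wint_orth_poly_lower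
    unfolding Q_def by (fastforce simp: mult.commute)+
  moreover have "((\<lambda>s. wint s (orth_poly s n * orth_poly s n)) has_real_derivative
                   wint t (Q * orth_poly t n) + wint t (orth_poly t n * Q)
                   - jump t * poly (orth_poly t n) t * poly (orth_poly t n) t) (at t)"
    unfolding Q_def using coeffs_differentiable_orth_poly[OF assms]
    by (intro has_real_derivative_wint_mult[OF assms]) simp_all
  ultimately show ?thesis
    unfolding hn_eq_wint Pn_eq_orth_poly by (simp add: mult_ac power2_eq_square)
qed

section \<open>Integration by parts and the ladder relation\<close>

text \<open>ibp_op f = x^(-\<alpha>) e^x (x^(\<alpha>+1) e^(-x) f)'. Against w(x,s), whose remaining factor
  A + B \<theta>(x - s) is piecewise constant, its integral reduces to the boundary term at the jump.\<close>
definition ibp_op :: "real poly \<Rightarrow> real poly" where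
  "ibp_op f = smult (\<alpha> + 1) f + monom 1 1 * pderiv f - monom 1 1 * f"

lemma ibp_op_sum: "ibp_op (\<Sum>i\<in>I. f i) = (\<Sum>i\<in>I. ibp_op (f i))"
  by (induction I rule: infinite_finite_induct)
     (simp_all add: ibp_op_def pderiv_add smult_add_right algebra_simps)

lemma ibp_op_monom: "ibp_op (monom c k) = smult (c * (\<alpha> + 1 + real k)) (monom 1 k) - monom c (Suc k)"
  unfolding ibp_op_def monom_1_mult_pderiv_monom
  by (simp add: smult_monom mult_monom add_monom algebra_simps)

lemma wint_ibp_op:
  assumes "s > 0"
  shows "wint s (ibp_op f) = - (s * jump s * poly f s)"
proof -
  have "wint s (ibp_op f) = (\<Sum>k\<le>degree f. wint s (ibp_op (monom (coeff f k) k)))"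
    by (subst (1) poly_as_sum_of_monoms[symmetric]) (simp add: ibp_op_sum wint_sum)
  also have "\<dots> = (\<Sum>k\<le>degree f. - (s * jump s * (coeff f k * s ^ k)))"
    using moment_Suc[OF assms]
    by (simp add: ibp_op_monom wint_diff wint_smult wint_monom algebra_simps)
  also have "\<dots> = - (s * jump s * poly f s)"
    by (simp add: poly_altdef sum_distrib_left sum_negf)
  finally show ?thesis .
qed

lemma wint_monom_1_mult_pderiv_mult_monom:
  assumes "s > 0"
  shows "wint s (monom 1 1 * pderiv p * monom 1 j) =
           wint s (p * monom 1 (Suc j)) - (\<alpha> + 1 + real j) * wint s (p * monom 1 j)
           - s * jump s * poly p s * s ^ j"
proof -
  have "monom 1 1 * pderiv (p * monom 1 j) = smult (real j) (p * monom 1 j) + monom 1 1 * pderiv p * monom 1 j"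
    using monom_1_mult_pderiv_monom[of "1::real" j] by (simp add: pderiv_mult algebra_simps)
  hence "monom 1 1 * pderiv p * monom 1 j
           = ibp_op (p * monom 1 j) - smult (\<alpha> + 1 + real j) (p * monom 1 j) + p * monom 1 (Suc j)"
    unfolding ibp_op_def by (simp add: mult_monom smult_add_left algebra_simps)
  thus ?thesis
    using wint_ibp_op[OF assms, of "p * monom 1 j"] by (simp add: wint_add wint_diff wint_smult poly_monom)
qed

lemma degree_coeffs_deriv_orth_poly:
  assumes "n \<ge> 1"
  shows "degree (coeffs_deriv (\<lambda>s. orth_poly s n) t n) < n"
  using eq_0_or_degree_less_if_coeff_eq_0[OF degree_coeffs_deriv, of "\<lambda>s. orth_poly s n" t n] assms
  by (auto simp: coeff_coeffs_deriv)

text \<open>Differentiate the orthogonality relation \<integral> P_n(x,s) x^j w(x,s) dx = 0 in s.\<close>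
lemma wint_coeffs_deriv_orth_poly_monom:
  assumes t: "t > 0" and j: "j < n"
  shows "wint t (coeffs_deriv (\<lambda>s. orth_poly s n) t n * monom 1 j) = jump t * poly (orth_poly t n) t * t ^ j"
proof -
  have "((\<lambda>s. wint s (orth_poly s n * monom 1 j)) has_real_derivative
          wint t (coeffs_deriv (\<lambda>s. orth_poly s n) t n * monom 1 j) + wint t (orth_poly t n * 0)
          - jump t * poly (orth_poly t n) t * poly (monom 1 j) t) (at t)"
    using has_real_derivative_wint_mult[OF t, of "\<lambda>s. orth_poly s n" n "\<lambda>s. monom 1 j"] j
    by (simp add: coeffs_differentiable_orth_poly[OF t] coeffs_differentiable_const coeffs_deriv_const
                  degree_monom_le order.trans[OF degree_monom_le])
  moreover have "(\<lambda>s. wint s (orth_poly s n * monom 1 j)) = (\<lambda>s. 0)"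
    using j by (intro ext wint_orth_poly_lower) (simp add: degree_monom_eq)
  ultimately show ?thesis
    using DERIV_unique DERIV_const by (fastforce simp: poly_monom)
qed

definition ladder_poly :: "real \<Rightarrow> nat \<Rightarrow> real poly" where
  "ladder_poly t n =
     monom 1 1 * pderiv (orth_poly t n) + smult t (coeffs_deriv (\<lambda>s. orth_poly s n) t n)
     - smult (real n) (orth_poly t n)
     - smult (wint t (orth_poly t n * orth_poly t n) / wint t (orth_poly t (n - 1) * orth_poly t (n - 1)))
         (orth_poly t (n - 1))"

lemma wint_orth_poly_monom:
  "wint s (orth_poly s n * monom 1 j) = (if j = n then wint s (orth_poly s n * orth_poly s n) else 0)"
  if "j \<le> n"
  using that wint_orth_poly_monic[of "monom 1 n" n s] wint_orth_poly_lower[of "monom 1 j" n s]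
  by (auto simp: degree_monom_eq)

lemma wint_ladder_poly_monom:
  assumes t: "t > 0" and j: "j < n"
  shows "wint t (ladder_poly t n * monom 1 j) = 0"
proof -
  define h where "h k = wint t (orth_poly t k * orth_poly t k)" for k
  define u where "u = poly (orth_poly t n) t"
  have "ladder_poly t n * monom 1 j =
      monom 1 1 * pderiv (orth_poly t n) * monom 1 j
      + smult t (coeffs_deriv (\<lambda>s. orth_poly s n) t n * monom 1 j)
      - smult (real n) (orth_poly t n * monom 1 j) - smult (h n / h (n - 1)) (orth_poly t (n - 1) * monom 1 j)"
    unfolding ladder_poly_def h_def by (simp add: algebra_simps)
  hence "wint t (ladder_poly t n * monom 1 j)
      = wint t (orth_poly t n * monom 1 (Suc j)) - (\<alpha> + 1 + real j) * wint t (orth_poly t n * monom 1 j)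
        - t * jump t * u * t ^ j + t * (jump t * u * t ^ j)
        - real n * wint t (orth_poly t n * monom 1 j) - h n / h (n - 1) * wint t (orth_poly t (n - 1) * monom 1 j)"
    by (simp only: wint_add wint_diff wint_smult wint_monom_1_mult_pderiv_mult_monom[OF t]
                   wint_coeffs_deriv_orth_poly_monom[OF t j] u_def)
  also have "\<dots> = (if Suc j = n then h n else 0) - h n / h (n - 1) * (if j = n - 1 then h (n - 1) else 0)"
    using j wint_orth_poly_monom[of j n t] wint_orth_poly_monom[of "Suc j" n t]
      wint_orth_poly_monom[of j "n - 1" t]
    by (simp add: h_def)
  also have "\<dots> = 0"
    using j wint_square_pos[OF orth_poly_nonzero[of t "n - 1"], of t] by (auto simp: h_def)
  finally show ?thesis .
qed

lemma ladder_poly_eq_0: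
  assumes t: "t > 0" and n: "n \<ge> 1"
  shows "ladder_poly t n = 0"
proof -
  have "degree (monom 1 1 * pderiv (orth_poly t n)) \<le> n"
    using degree_mult_le[of "monom (1::real) 1" "pderiv (orth_poly t n)"] n
    by (simp add: degree_pderiv degree_monom_eq)
  hence "degree (ladder_poly t n) \<le> n"
    unfolding ladder_poly_def using degree_coeffs_deriv_orth_poly[OF n, of t]
    by (intro degree_diff_le degree_add_le) (auto intro: order.trans[OF degree_smult_le])
  moreover have "coeff (ladder_poly t n) n = 0"
  proof -
    have "coeff (monom 1 1 * pderiv (orth_poly t n)) n = real n"
      using n by (simp add: coeff_monom_mult coeff_pderiv)
    moreover have "coeff (coeffs_deriv (\<lambda>s. orth_poly s n) t n) n = 0"
      "coeff (orth_poly t (n - 1)) n = 0"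
      using degree_coeffs_deriv_orth_poly[OF n, of t] n by (simp_all add: coeff_eq_0)
    ultimately show ?thesis unfolding ladder_poly_def by simp
  qed
  ultimately have "degree (ladder_poly t n) < n"
    using eq_0_or_degree_less_if_coeff_eq_0[of "ladder_poly t n" n] n by auto
  hence "wint t (ladder_poly t n * ladder_poly t n) = 0"
    using wint_orth_if_orth_monomials[of n t "ladder_poly t n"] wint_ladder_poly_monom[OF t] by blast
  thus ?thesis by (simp add: wint_square_eq_0_iff)
qed

lemma has_real_derivative_Pn_diagonal:
  assumes t: "t > 0" and n: "n \<ge> 1"
  shows "\<exists>D. ((\<lambda>s. poly (Pn \<alpha> A B n s) s) has_real_derivative D) (at t) \<and>
             t * D = real n * poly (Pn \<alpha> A B n t) t
                     + hn \<alpha> A B n t / hn \<alpha> A B (n - 1) t * poly (Pn \<alpha> A B (n - 1) t) t"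
proof -
  have "poly (ladder_poly t n) t = 0" using ladder_poly_eq_0[OF t n] by simp
  hence "t * (poly (coeffs_deriv (\<lambda>s. orth_poly s n) t n) t + poly (pderiv (orth_poly t n)) t)
           = real n * poly (orth_poly t n) t
             + hn \<alpha> A B n t / hn \<alpha> A B (n - 1) t * poly (orth_poly t (n - 1)) t"
    by (simp add: ladder_poly_def hn_eq_wint poly_monom algebra_simps)
  moreover have "((\<lambda>s. poly (orth_poly s n) s) has_real_derivative
      poly (coeffs_deriv (\<lambda>s. orth_poly s n) t n) t + poly (pderiv (orth_poly t n)) t) (at t)"
    by (intro has_real_derivative_poly_diagonal coeffs_differentiable_orth_poly[OF t]) simp
  ultimately show ?thesis unfolding Pn_eq_orth_poly by blast
qed

end

theorem lemma11:
  fixes \<alpha> A B t :: real and n :: nat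
  assumes "\<alpha> > 0" and "A \<ge> 0" and "B > 0" and "t > 0" and "n \<ge> 1"
  shows "\<exists>D. ((\<lambda>s. Rn \<alpha> A B n s) has_real_derivative D) (at t) \<and>
             t * D = 2 * rn \<alpha> A B n t
                     + (2 * real n + \<alpha> - t + t * Rn \<alpha> A B n t) * Rn \<alpha> A B n t"
proof -
  interpret jump_weight \<alpha> A B using assms by unfold_locales auto
  define u where "u s = poly (Pn \<alpha> A B n s) s" for s
  define h where "h s = hn \<alpha> A B n s" for s
  define v where "v = poly (Pn \<alpha> A B (n - 1) t) t"
  define h' where "h' = hn \<alpha> A B (n - 1) t"
  obtain Du where Du: "(u has_real_derivative Du) (at t)" and ladder: "t * Du = n * u t + h t / h' * v"
    using has_real_derivative_Pn_diagonal[OF assms(4,5)] unfolding u_def h_def h'_def v_def by blast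
  have pos: "h t > 0" "h' > 0"
    unfolding h_def h'_def hn_eq_wint by (simp_all add: wint_square_pos orth_poly_nonzero)
  define D where "D = (((\<alpha> - t) * jump t / t * u t ^ 2 + jump t * (2 * u t * Du)) * h t
                        + jump t * u t ^ 2 * (jump t * u t ^ 2)) / (h t * h t)"
  have deriv: "((\<lambda>s. jump s * u s ^ 2 / h s) has_real_derivative D) (at t)"
    using has_real_derivative_jump[OF assms(4)] Du has_real_derivative_hn[OF assms(4), of n] pos
    unfolding D_def h_def u_def
    by (auto intro!: derivative_eq_intros simp: power2_eq_square)
  have R: "Rn \<alpha> A B n = (\<lambda>s. jump s * u s ^ 2 / h s)" and r: "rn \<alpha> A B n t = jump t * u t * v / h'"
    by (auto simp: Rn_def rn_def jump_def u_def h_def v_def h'_def)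
  have "t * D = ((\<alpha> - t) * jump t * u t ^ 2 + 2 * jump t * u t * (t * Du)) / h t
                + t * (jump t * u t ^ 2 / h t)\<^sup>2"
    unfolding D_def using pos assms(4) by (simp add: field_simps power2_eq_square)
  also have "\<dots> = 2 * rn \<alpha> A B n t + (2 * real n + \<alpha> - t + t * Rn \<alpha> A B n t) * Rn \<alpha> A B n t"
    unfolding ladder R r using pos by (simp add: field_simps power2_eq_square)
  finally show ?thesis using deriv R by auto
qed

end
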